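(* For all $s$ with $\mathrm{Re}(s)>\tfrac12$, the integral $\int_0^\infty\vartheta(u)K_C(s,u)\,du$ converges absolutely and $$\exp\left[\int_0^\infty\vartheta(u)\,K_C(s,u)\,du\right]=\Gamma\!\left(\frac s2\right)\pi^{-s/2},\qquad K_C(s,u):=\frac{2}{\pi}\,\frac{s(s-1)\,u}{\bigl(u^2+(s-\tfrac12)^2\bigr)(u^2+\tfrac14)}.$$
   Context: The function $\vartheta:\mathbb R\to\mathbb R$ is $$\vartheta(t):=-\arctan(2t)-\frac t2(\gamma+\log\pi)+\sum_{k=1}^\infty\left\{\frac{t}{2k}-\arctan\frac{t}{2k+\frac12}\right\},$$ with $\gamma$ Euler's constant. *)

theory Defs
  imports "HOL-Analysis.Analysis"
begin

definition vartheta :: "real \<Rightarrow> real" where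
  "vartheta t = - arctan (2 * t) - t / 2 * (euler_mascheroni + ln pi)
     + (\<Sum>k. t / (2 * real (Suc k)) - arctan (t / (2 * real (Suc k) + 1 / 2)))"

definition K_C :: "complex \<Rightarrow> real \<Rightarrow> complex" where
  "K_C s u = (2 / of_real pi) * (s * (s - 1) * of_real u) /
     ((of_real (u\<^sup>2) + (s - 1 / 2)\<^sup>2) * of_real (u\<^sup>2 + 1 / 4))"

end

theory Submission
  imports Defs "HOL-Real_Asymp.Real_Asymp"
begin

(* Write b = s - 1/2, so that Re b > 0 and
     K_C s u = (2/pi) (u/(u^2 + 1/4) - u/(u^2 + b^2)) = diff_kernel b u,
   a kernel of size O(u^-3).  vartheta is the pointwise limit of the partial sums
     theta_partial n u = -arctan (2u) - u (gamma + ln pi)/2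
                         + sum_{k<n} (u/(2k+2) - arctan (u/(2k+2+1/2))),
   and each summand integrates against the kernel in closed form:
     int u diff_kernel b u du = b - 1/2,
     int arctan (u/a) diff_kernel b u du = Ln ((a+b)/(a+1/2)).
   The second identity follows by Fubini from arctan (u/a) = int_a^oo u/(u^2+x^2) dx; both
   reduce to the elementary integrals int_0^oo 1/(u^2+c^2) du = pi/(2c) for Re c > 0.
   Since |theta_partial n u| <= C (1 + u + u^(3/2)), dominated convergence shows that the
   integral of vartheta against K_C s is the limit of these closed forms.  Their exponentials
   are pi^(-(s-1)/2) times ratios of partial Weierstrass products of Gamma (s/2) and
   Gamma (1/2), which converge to pi^(-(s-1)/2) Gamma (s/2) / sqrt pi = Gamma (s/2) pi^(-s/2). *)


section \<open>Integrability on half-lines\<close>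

lemma real_sqrt_le_self: "1 \<le> u \<Longrightarrow> sqrt u \<le> (u::real)"
  by (rule real_le_lsqrt) (auto simp: power2_eq_square)

lemma set_integrable_inverse_three_halves:
  "set_integrable lborel {1<..} (\<lambda>u::real. 1 / (u * sqrt u))"
proof -
  have "set_integrable lborel (einterval (ereal 1) \<infinity>) (\<lambda>u::real. 1 / (u * sqrt u))"
  proof (rule interval_integral_FTC_nonneg[where F="\<lambda>x. - 2 / sqrt x" and A="-2" and B=0])
    fix x assume "ereal 1 < ereal x" "ereal x < \<infinity>"
    hence x: "x > 1" by simp
    show "((\<lambda>x. - 2 / sqrt x) has_real_derivative 1 / (x * sqrt x)) (at x)"
      using x by (auto intro!: derivative_eq_intros simp: field_simps)
    show "isCont (\<lambda>u. 1 / (u * sqrt u)) x" using x by (auto intro!: continuous_intros)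
  next
    show "(((\<lambda>x. - 2 / sqrt x) \<circ> real_of_ereal) \<longlongrightarrow> - 2) (at_right (ereal 1))"
      unfolding ereal_tendsto_simps by (auto intro!: tendsto_eq_intros)
    show "(((\<lambda>x. - 2 / sqrt x) \<circ> real_of_ereal) \<longlongrightarrow> 0) (at_left \<infinity>)"
      unfolding ereal_tendsto_simps by real_asymp
  qed auto
  moreover have "einterval (ereal 1) \<infinity> = {1::real<..}" by (auto simp: einterval_def)
  ultimately show ?thesis by simp
qed

lemma set_integrable_Ioi_decay:
  fixes f :: "real \<Rightarrow> 'a::{banach, second_countable_topology}"
  assumes a: "0 \<le> a" and cont: "continuous_on {a..} f"
    and decay: "\<And>u. 1 \<le> u \<Longrightarrow> norm (f u) \<le> C / (u * sqrt u)"
  shows "set_integrable lborel {a<..} f"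
proof -
  let ?m = "max a 1"
  have near: "set_integrable lborel {a..?m} f"
    by (rule borel_integrable_atLeastAtMost') (rule continuous_on_subset[OF cont], auto)
  have "set_integrable lborel {1<..} (\<lambda>u::real. C * (1 / (u * sqrt u)))"
    using set_integrable_inverse_three_halves by (rule set_integrable_mult_right)
  hence "set_integrable lborel {?m<..} (\<lambda>u::real. C * (1 / (u * sqrt u)))"
    by (rule set_integrable_subset) auto
  hence far: "set_integrable lborel {?m<..} f"
  proof (rule set_integrable_bound)
    show "set_borel_measurable lborel {?m<..} f"
      unfolding set_borel_measurable_def measurable_lborel2
      by (rule borel_measurable_continuous_on_indicator) (auto intro!: continuous_on_subset[OF cont])
    have "norm (f x) \<le> norm (C * (1 / (x * sqrt x)))" if x: "x > ?m" for x
    proof -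
      have "norm (f x) \<le> C / (x * sqrt x)" using x by (intro decay) auto
      also have "\<dots> \<le> \<bar>C\<bar> / (x * sqrt x)" using x by (intro divide_right_mono) auto
      finally show ?thesis using x by (simp add: abs_mult)
    qed
    thus "AE x\<in>{?m<..} in lborel. norm (f x) \<le> norm (C * (1 / (x * sqrt x)))"
      by (auto intro!: AE_I2)
  qed
  have "set_integrable lborel ({a..?m} \<union> {?m<..}) f"
    using near far by (rule set_integrable_Un) auto
  thus ?thesis by (rule set_integrable_subset) auto
qed


section \<open>Integrals of rational functions of \<open>u\<^sup>2\<close>\<close>

(* For Re c > 0, |u^2 + c^2| is bounded below by a multiple of u^2 + |c|^2; the defect of
   the squared inequality is (Im c)^2 (u^2 - |c|^2)^2. *)
lemma norm_sq_plus_lower_bound: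
  fixes c :: complex and u :: real
  assumes "Re c > 0"
  shows "Re c * (u\<^sup>2 + (cmod c)\<^sup>2) \<le> cmod (of_real u ^ 2 + c ^ 2) * cmod c"
proof -
  define p q where "p = Re c" and "q = Im c"
  have parts: "Re (of_real u ^ 2 + c ^ 2) = u\<^sup>2 + p\<^sup>2 - q\<^sup>2" "Im (of_real u ^ 2 + c ^ 2) = 2 * p * q"
    by (simp_all add: power2_eq_square p_def q_def)
  have norm_sq: "(cmod (of_real u ^ 2 + c ^ 2))\<^sup>2 = (u\<^sup>2 + p\<^sup>2 - q\<^sup>2)\<^sup>2 + (2 * p * q)\<^sup>2"
    by (simp only: cmod_power2 parts)
  have c_sq: "(cmod c)\<^sup>2 = p\<^sup>2 + q\<^sup>2" by (simp add: cmod_power2 p_def q_def)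
  have "(cmod (of_real u ^ 2 + c ^ 2) * cmod c)\<^sup>2 - (Re c * (u\<^sup>2 + (cmod c)\<^sup>2))\<^sup>2
      = q\<^sup>2 * (u\<^sup>2 - p\<^sup>2 - q\<^sup>2)\<^sup>2"
    unfolding power_mult_distrib norm_sq c_sq p_def[symmetric]
    by (simp add: power2_eq_square algebra_simps)
  hence "(Re c * (u\<^sup>2 + (cmod c)\<^sup>2))\<^sup>2 \<le> (cmod (of_real u ^ 2 + c ^ 2) * cmod c)\<^sup>2"
    by (simp add: algebra_simps)
  thus ?thesis by (rule power2_le_imp_le) simp
qed

lemma sq_plus_nonzero:
  fixes c :: complex and u :: real
  assumes "Re c > 0"
  shows "of_real u ^ 2 + c ^ 2 \<noteq> 0"
proof
  assume "of_real u ^ 2 + c ^ 2 = 0"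
  with norm_sq_plus_lower_bound[OF assms, of u] have "Re c * (u\<^sup>2 + (cmod c)\<^sup>2) \<le> 0" by simp
  moreover have "cmod c > 0" using assms by auto
  hence "u\<^sup>2 + (cmod c)\<^sup>2 > 0" by (simp add: add_nonneg_pos)
  ultimately show False using assms by (simp add: mult_le_0_iff)
qed

lemma norm_inverse_sq_plus_le:
  fixes c :: complex and u :: real
  assumes c: "Re c > 0"
  shows "cmod (1 / (of_real u ^ 2 + c ^ 2)) \<le> (cmod c / Re c) / (u\<^sup>2 + (cmod c)\<^sup>2)"
proof -
  have c_pos: "cmod c > 0" using c by auto
  have pos: "u\<^sup>2 + (cmod c)\<^sup>2 > 0" using c_pos by (simp add: add_nonneg_pos)
  have "Re c * (u\<^sup>2 + (cmod c)\<^sup>2) / cmod c \<le> cmod (of_real u ^ 2 + c ^ 2)"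
    using norm_sq_plus_lower_bound[OF c, of u] c_pos by (simp add: pos_divide_le_eq)
  hence "1 / cmod (of_real u ^ 2 + c ^ 2) \<le> 1 / (Re c * (u\<^sup>2 + (cmod c)\<^sup>2) / cmod c)"
    using pos c_pos c sq_plus_nonzero[OF c, of u] by (intro divide_left_mono) auto
  thus ?thesis by (simp add: norm_divide)
qed

lemma set_integrable_inverse_sq_plus:
  fixes c :: complex
  assumes c: "Re c > 0"
  shows "set_integrable lborel {0<..} (\<lambda>u::real. 1 / (of_real u ^ 2 + c ^ 2))"
proof (rule set_integrable_Ioi_decay[where C="cmod c / Re c"])
  show "continuous_on {0..} (\<lambda>u::real. 1 / (of_real u ^ 2 + c ^ 2))"
    using sq_plus_nonzero[OF c] by (auto intro!: continuous_intros)
  fix u :: real assume u: "1 \<le> u"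
  have "u * sqrt u \<le> u * u" using u real_sqrt_le_self[OF u] by (intro mult_left_mono) auto
  also have "\<dots> \<le> u\<^sup>2 + (cmod c)\<^sup>2" by (simp add: power2_eq_square)
  finally have "(cmod c / Re c) / (u\<^sup>2 + (cmod c)\<^sup>2) \<le> (cmod c / Re c) / (u * sqrt u)"
    using u c by (intro divide_left_mono mult_pos_pos) (auto intro: add_pos_nonneg)
  with norm_inverse_sq_plus_le[OF c, of u]
  show "cmod (1 / (of_real u ^ 2 + c ^ 2)) \<le> (cmod c / Re c) / (u * sqrt u)" by linarith
qed simp

(* A primitive of 1/(z^2 + c^2) along the real axis, a complex analogue of arctan (z/c) / c. *)
definition inverse_sq_plus_primitive :: "complex \<Rightarrow> complex \<Rightarrow> complex" where
  "inverse_sq_plus_primitive c z = (Ln (z - \<i> * c) - Ln (z + \<i> * c)) / (2 * \<i> * c)"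

lemma shifted_real_notin_nonpos_Reals:
  fixes c :: complex and x :: real
  assumes "Re c > 0"
  shows "of_real x - \<i> * c \<notin> \<real>\<^sub>\<le>\<^sub>0" and "of_real x + \<i> * c \<notin> \<real>\<^sub>\<le>\<^sub>0"
  using assms by (simp_all add: complex_nonpos_Reals_iff)

lemma has_field_derivative_inverse_sq_plus_primitive:
  fixes c :: complex and x :: real
  assumes c: "Re c > 0"
  shows "(inverse_sq_plus_primitive c has_field_derivative 1 / (of_real x ^ 2 + c ^ 2)) (at (of_real x))"
proof -
  note notin = shifted_real_notin_nonpos_Reals[OF c, of x]
  have nz: "of_real x - \<i> * c \<noteq> 0" "of_real x + \<i> * c \<noteq> 0" "c \<noteq> 0"
    using notin c by auto
  have "(inverse_sq_plus_primitive c has_field_derivative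
          (inverse (of_real x - \<i> * c) - inverse (of_real x + \<i> * c)) / (2 * \<i> * c)) (at (of_real x))"
    unfolding inverse_sq_plus_primitive_def[abs_def]
    by (intro DERIV_cdivide DERIV_diff) (auto intro!: derivative_eq_intros notin)
  moreover have "(inverse (of_real x - \<i> * c) - inverse (of_real x + \<i> * c)) / (2 * \<i> * c)
      = 1 / (of_real x ^ 2 + c ^ 2)"
  proof -
    have "inverse (of_real x - \<i> * c) - inverse (of_real x + \<i> * c)
        = ((of_real x + \<i> * c) - (of_real x - \<i> * c)) / ((of_real x - \<i> * c) * (of_real x + \<i> * c))"
      using nz by (simp add: field_simps)
    also have "\<dots> = (2 * \<i> * c) / (of_real x ^ 2 + c ^ 2)"
      by (simp add: algebra_simps power2_eq_square)
    finally show ?thesis using nz by simp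
  qed
  ultimately show ?thesis by simp
qed

lemma inverse_sq_plus_primitive_zero:
  assumes c: "Re c > 0"
  shows "inverse_sq_plus_primitive c 0 = - of_real pi / (2 * c)"
proof -
  have "Ln (- (\<i> * c)) = Ln (\<i> * c) - \<i> * of_real pi"
    using c by (subst Ln_minus) auto
  hence "inverse_sq_plus_primitive c 0 = - (\<i> * of_real pi) / (2 * \<i> * c)"
    unfolding inverse_sq_plus_primitive_def by simp
  thus ?thesis using c by (auto simp: field_simps)
qed

lemma tendsto_inverse_sq_plus_primitive:
  assumes c: "Re c > 0"
  shows "((\<lambda>x::real. inverse_sq_plus_primitive c (of_real x)) \<longlongrightarrow> 0) at_top"
proof -
  define h where "h x = (Ln (1 - \<i> * c / of_real x) - Ln (1 + \<i> * c / of_real x)) / (2 * \<i> * c)"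
    for x :: real
  have "eventually (\<lambda>x. inverse_sq_plus_primitive c (of_real x) = h x) at_top"
    using eventually_gt_at_top[of 0]
  proof eventually_elim
    case (elim x)
    have split: "of_real x - \<i> * c = of_real x * (1 - \<i> * c / of_real x)"
      "of_real x + \<i> * c = of_real x * (1 + \<i> * c / of_real x)"
      using elim by (simp_all add: field_simps)
    have "1 - \<i> * c / of_real x \<noteq> 0" "1 + \<i> * c / of_real x \<noteq> 0"
      using shifted_real_notin_nonpos_Reals[OF c, of x] elim split by auto
    thus ?case unfolding inverse_sq_plus_primitive_def h_def split using elim
      by (simp add: Ln_times_of_real)
  qed
  moreover have "((\<lambda>x::real. \<i> * c / of_real x) \<longlongrightarrow> 0) at_top"
    by (intro tendsto_divide_0[OF tendsto_const] filterlim_of_real_at_infinity)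
  hence "(h \<longlongrightarrow> (Ln (1 - 0) - Ln (1 + 0)) / (2 * \<i> * c)) at_top"
    unfolding h_def using c by (intro tendsto_intros tendsto_Ln) (auto simp: complex_nonpos_Reals_iff)
  ultimately show ?thesis by (simp add: tendsto_cong)
qed

lemma integral_inverse_sq_plus:
  fixes c :: complex
  assumes c: "Re c > 0"
  shows "(LBINT u:{0<..}. 1 / (of_real u ^ 2 + c ^ 2)) = of_real pi / (2 * c)"
proof -
  let ?G = "\<lambda>x::real. inverse_sq_plus_primitive c (of_real x)"
  have deriv: "(?G has_vector_derivative 1 / (of_real x ^ 2 + c ^ 2)) (at x)" for x :: real
    by (rule has_vector_derivative_real_field[OF has_field_derivative_inverse_sq_plus_primitive[OF c]])
  have "(LBINT u=ereal 0..\<infinity>. 1 / (of_real u ^ 2 + c ^ 2)) = 0 - ?G 0"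
  proof (rule interval_integral_FTC_integrable[where F="?G"])
    fix x :: real
    show "(?G has_vector_derivative 1 / (of_real x ^ 2 + c ^ 2)) (at x)" by (rule deriv)
    show "isCont (\<lambda>u. 1 / (complex_of_real u ^ 2 + c ^ 2)) x"
      using sq_plus_nonzero[OF c, of x] by (auto intro!: continuous_intros)
  next
    have "einterval (ereal 0) \<infinity> = {0::real<..}" by (auto simp: einterval_def)
    thus "set_integrable lborel (einterval (ereal 0) \<infinity>) (\<lambda>u. 1 / (complex_of_real u ^ 2 + c ^ 2))"
      using set_integrable_inverse_sq_plus[OF c] by simp
    have "isCont ?G 0" using deriv[of 0] by (rule has_vector_derivative_continuous)
    thus "((?G \<circ> real_of_ereal) \<longlongrightarrow> ?G 0) (at_right (ereal 0))"
      unfolding ereal_tendsto_simps by (simp add: isCont_def filterlim_at_split)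
    show "((?G \<circ> real_of_ereal) \<longlongrightarrow> 0) (at_left \<infinity>)"
      unfolding ereal_tendsto_simps by (rule tendsto_inverse_sq_plus_primitive[OF c])
  qed auto
  thus ?thesis using inverse_sq_plus_primitive_zero[OF c]
    by (simp add: interval_integral_to_infinity_eq)
qed

lemma integral_sq_over_sq_plus_sq_real:
  fixes x :: real assumes x: "x > 0"
  shows "(LBINT u:{0<..}. u\<^sup>2 / ((u\<^sup>2 + x\<^sup>2) * (u\<^sup>2 + x\<^sup>2))) = pi / (4 * x)"
proof -
  define F where "F u = arctan (u / x) / (2 * x) - u / (2 * (u\<^sup>2 + x\<^sup>2))" for u
  have pos: "u\<^sup>2 + x\<^sup>2 > 0" for u using x by (simp add: add_nonneg_pos)
  have deriv: "(F has_real_derivative u\<^sup>2 / ((u\<^sup>2 + x\<^sup>2) * (u\<^sup>2 + x\<^sup>2))) (at u)" for u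
  proof -
    have "(F has_real_derivative
        inverse (1 + (u / x)\<^sup>2) * (1 / x) / (2 * x)
        - (1 * (2 * (u\<^sup>2 + x\<^sup>2)) - u * (2 * (2 * u))) / ((2 * (u\<^sup>2 + x\<^sup>2)) * (2 * (u\<^sup>2 + x\<^sup>2)))) (at u)"
      unfolding F_def[abs_def] using pos[of u] x
      by (intro DERIV_diff DERIV_cdivide DERIV_divide DERIV_chain2[OF DERIV_arctan])
         (auto intro!: derivative_eq_intros)
    moreover have "inverse (1 + (u / x)\<^sup>2) * (1 / x) / (2 * x)
        - (1 * (2 * (u\<^sup>2 + x\<^sup>2)) - u * (2 * (2 * u))) / ((2 * (u\<^sup>2 + x\<^sup>2)) * (2 * (u\<^sup>2 + x\<^sup>2)))
        = u\<^sup>2 / ((u\<^sup>2 + x\<^sup>2) * (u\<^sup>2 + x\<^sup>2))"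
    proof -
      define S where "S = u\<^sup>2 + x\<^sup>2"
      have "inverse (1 + (u / x)\<^sup>2) = x\<^sup>2 / S" using x unfolding S_def by (simp add: field_simps)
      moreover have "S > 0" using pos[of u] unfolding S_def .
      ultimately show ?thesis unfolding S_def[symmetric] using x by (simp add: field_simps power2_eq_square)
    qed
    ultimately show ?thesis by simp
  qed
  have "(LBINT u=ereal 0..\<infinity>. u\<^sup>2 / ((u\<^sup>2 + x\<^sup>2) * (u\<^sup>2 + x\<^sup>2))) = pi / (4 * x) - 0"
  proof (rule interval_integral_FTC_nonneg(2)[where F=F])
    fix u
    show "(F has_real_derivative u\<^sup>2 / ((u\<^sup>2 + x\<^sup>2) * (u\<^sup>2 + x\<^sup>2))) (at u)" by (rule deriv)
    show "isCont (\<lambda>u. u\<^sup>2 / ((u\<^sup>2 + x\<^sup>2) * (u\<^sup>2 + x\<^sup>2))) u"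
      using pos[of u] by (auto intro!: continuous_intros)
  next
    show "((F \<circ> real_of_ereal) \<longlongrightarrow> 0) (at_right (ereal 0))"
      unfolding ereal_tendsto_simps F_def using x by (auto intro!: tendsto_eq_intros)
    have "(F \<longlongrightarrow> pi * inverse x / 4) at_top"
      unfolding F_def using x by real_asymp
    thus "((F \<circ> real_of_ereal) \<longlongrightarrow> pi / (4 * x)) (at_left \<infinity>)"
      unfolding ereal_tendsto_simps by (simp add: field_simps)
  qed auto
  thus ?thesis by (simp add: interval_integral_to_infinity_eq)
qed

(* Bounded by 1/|u^2 + c^2|, since 0 <= u^2/(u^2 + x^2) <= 1. *)
lemma set_integrable_sq_over_products:
  fixes c :: complex and x :: real
  assumes c: "Re c > 0"
  shows "set_integrable lborel {0<..}
     (\<lambda>u::real. of_real u ^ 2 / ((of_real u ^ 2 + of_real x ^ 2) * (of_real u ^ 2 + c ^ 2)))"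
proof (rule set_integrable_bound[OF set_integrable_inverse_sq_plus[OF c]])
  have real_nz: "(of_real u ^ 2 + of_real x ^ 2 :: complex) \<noteq> 0" if "u > 0" for u
  proof -
    have "u\<^sup>2 + x\<^sup>2 > 0" using that by (simp add: add_pos_nonneg)
    moreover have "(of_real u ^ 2 + of_real x ^ 2 :: complex) = of_real (u\<^sup>2 + x\<^sup>2)" by simp
    ultimately show ?thesis by (metis of_real_eq_0_iff less_irrefl)
  qed
  show "set_borel_measurable lborel {0<..}
     (\<lambda>u::real. of_real u ^ 2 / ((of_real u ^ 2 + of_real x ^ 2) * (of_real u ^ 2 + c ^ 2)))"
    unfolding set_borel_measurable_def measurable_lborel2
    by (intro borel_measurable_continuous_on_indicator continuous_intros)
       (auto simp: sq_plus_nonzero[OF c] real_nz)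
  have "norm (of_real u ^ 2 / ((of_real u ^ 2 + of_real x ^ 2) * (of_real u ^ 2 + c ^ 2)))
      \<le> norm (1 / (of_real u ^ 2 + c ^ 2))" if u: "u > 0" for u :: real
  proof -
    have pos: "u\<^sup>2 + x\<^sup>2 > 0" using u by (simp add: add_pos_nonneg)
    have "norm ((of_real u ^ 2 :: complex) / (of_real u ^ 2 + of_real x ^ 2)) = u\<^sup>2 / (u\<^sup>2 + x\<^sup>2)"
      using pos by (simp add: norm_divide flip: of_real_power of_real_add)
    also have "\<dots> \<le> 1" using pos by simp
    finally have "norm ((of_real u ^ 2 :: complex) / (of_real u ^ 2 + of_real x ^ 2))
        * norm (1 / (of_real u ^ 2 + c ^ 2)) \<le> 1 * norm (1 / (of_real u ^ 2 + c ^ 2))"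
      by (intro mult_right_mono) auto
    thus ?thesis by (simp add: norm_mult norm_divide)
  qed
  thus "AE u\<in>{0<..} in lborel.
      norm (of_real u ^ 2 / ((of_real u ^ 2 + of_real x ^ 2) * (of_real u ^ 2 + c ^ 2)))
      \<le> norm (1 / (of_real u ^ 2 + c ^ 2))" by (auto intro!: AE_I2)
qed

lemma sq_over_products_partial_fractions:
  fixes A X C :: complex assumes "A + X \<noteq> 0" "A + C \<noteq> 0" "C - X \<noteq> 0"
  shows "A / ((A + X) * (A + C)) = C / (C - X) * (1 / (A + C)) - X / (C - X) * (1 / (A + X))"
proof -
  have "C / (C - X) * (1 / (A + C)) - X / (C - X) * (1 / (A + X))
      = (C * (A + X) - X * (A + C)) / ((C - X) * ((A + C) * (A + X)))"
    using assms by (simp add: frac_eq_eq diff_frac_eq) (simp add: algebra_simps)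
  also have "C * (A + X) - X * (A + C) = A * (C - X)" by (simp add: algebra_simps)
  finally show ?thesis using assms by (simp add: mult.commute)
qed

lemma integral_sq_over_products_distinct:
  fixes c :: complex and x :: real
  assumes c: "Re c > 0" and x: "x > 0" and distinct: "c \<noteq> of_real x"
  shows "(LBINT u:{0<..}. of_real u ^ 2 / ((of_real u ^ 2 + of_real x ^ 2) * (of_real u ^ 2 + c ^ 2)))
     = of_real pi / (2 * (of_real x + c))"
proof -
  have xc: "Re (of_real x :: complex) > 0" using x by simp
  have diff_nz: "c ^ 2 - (of_real x) ^ 2 \<noteq> 0"
  proof
    assume "c ^ 2 - (of_real x) ^ 2 = 0"
    hence "(c - of_real x) * (c + of_real x) = 0" by (simp add: algebra_simps power2_eq_square)
    hence "c + of_real x = 0" using distinct by simp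
    from arg_cong[OF this, of Re] show False using c x by simp
  qed
  define k1 where "k1 = c\<^sup>2 / (c ^ 2 - (of_real x) ^ 2)"
  define k2 where "k2 = (of_real x)\<^sup>2 / (c ^ 2 - (of_real x) ^ 2)"
  have pf: "of_real u ^ 2 / ((of_real u ^ 2 + of_real x ^ 2) * (of_real u ^ 2 + c ^ 2))
      = k1 * (1 / (of_real u ^ 2 + c ^ 2)) - k2 * (1 / (of_real u ^ 2 + (of_real x) ^ 2))" for u :: real
    unfolding k1_def k2_def
    by (rule sq_over_products_partial_fractions[OF sq_plus_nonzero[OF xc] sq_plus_nonzero[OF c] diff_nz])
  have int1: "set_integrable lborel {0<..} (\<lambda>u::real. k1 * (1 / (of_real u ^ 2 + c ^ 2)))"
    by (rule set_integrable_mult_right) (rule set_integrable_inverse_sq_plus[OF c])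
  have int2: "set_integrable lborel {0<..} (\<lambda>u::real. k2 * (1 / (of_real u ^ 2 + (of_real x) ^ 2)))"
    by (rule set_integrable_mult_right) (rule set_integrable_inverse_sq_plus[OF xc])
  have "(LBINT u:{0<..}. of_real u ^ 2 / ((of_real u ^ 2 + of_real x ^ 2) * (of_real u ^ 2 + c ^ 2)))
      = k1 * (of_real pi / (2 * c)) - k2 * (of_real pi / (2 * of_real x))"
    unfolding pf set_integral_diff(2)[OF int1 int2] set_integral_mult_right
      integral_inverse_sq_plus[OF c] integral_inverse_sq_plus[OF xc] ..
  also have "\<dots> = of_real pi / (2 * (of_real x + c))"
  proof -
    define D where "D = c ^ 2 - (of_real x) ^ 2"
    have factor: "D = (c - of_real x) * (c + of_real x)"
      unfolding D_def by (simp add: algebra_simps power2_eq_square)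
    have nz: "c - of_real x \<noteq> 0" "c + of_real x \<noteq> 0" "of_real x \<noteq> (0::complex)" "c \<noteq> 0"
      using distinct x c by (auto simp: complex_eq_iff)
    hence D_nz: "D \<noteq> 0" unfolding factor by simp
    have "k1 * (of_real pi / (2 * c)) - k2 * (of_real pi / (2 * of_real x))
        = (c - of_real x) * of_real pi / (2 * D)"
      unfolding k1_def k2_def D_def[symmetric] using nz D_nz by (simp add: field_simps power2_eq_square)
    also have "\<dots> = of_real pi / (2 * (of_real x + c))"
      unfolding factor using nz by (simp add: add.commute)
    finally show ?thesis .
  qed
  finally show ?thesis .
qed

lemma integral_sq_over_products:
  fixes c :: complex and x :: real
  assumes c: "Re c > 0" and x: "x > 0"
  shows "(LBINT u:{0<..}. of_real u ^ 2 / ((of_real u ^ 2 + of_real x ^ 2) * (of_real u ^ 2 + c ^ 2)))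
     = of_real pi / (2 * (of_real x + c))"
proof (cases "c = of_real x")
  case True
  have "(LBINT u:{0<..}. of_real u ^ 2 / ((of_real u ^ 2 + of_real x ^ 2) * (of_real u ^ 2 + c ^ 2)))
     = (LBINT u:{0<..}. complex_of_real (u\<^sup>2 / ((u\<^sup>2 + x\<^sup>2) * (u\<^sup>2 + x\<^sup>2))))"
    unfolding True by simp
  also have "\<dots> = of_real (pi / (4 * x))"
    by (simp only: set_integral_complex_of_real integral_sq_over_sq_plus_sq_real[OF x])
  finally show ?thesis using x unfolding True by (simp add: field_simps)
qed (rule integral_sq_over_products_distinct[OF c x])


section \<open>The kernel\<close>

(* For b = s - 1/2 the kernel K_C s is a difference of two Poisson-type kernels. *)
definition diff_kernel :: "complex \<Rightarrow> real \<Rightarrow> complex" where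
  "diff_kernel b u = (2 / of_real pi) *
     (of_real u / (of_real u ^ 2 + (1/2) ^ 2) - of_real u / (of_real u ^ 2 + b ^ 2))"

lemma half_sq_plus_nonzero: "(of_real u ^ 2 + (1/2) ^ 2 :: complex) \<noteq> 0"
  using sq_plus_nonzero[of "1/2" u] by simp

lemma diff_kernel_closed_form:
  assumes b: "Re b > 0"
  shows "diff_kernel b u = (2 / of_real pi) * ((b\<^sup>2 - 1/4) * of_real u)
                        / ((of_real u ^ 2 + b ^ 2) * of_real (u\<^sup>2 + 1/4))"
proof -
  have "of_real u / (of_real u ^ 2 + (1/2) ^ 2) - of_real u / (of_real u ^ 2 + b ^ 2)
      = of_real u * ((of_real u ^ 2 + b ^ 2) - (of_real u ^ 2 + (1/2) ^ 2))
        / ((of_real u ^ 2 + b ^ 2) * (of_real u ^ 2 + (1/2) ^ 2))"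
    using half_sq_plus_nonzero[of u] sq_plus_nonzero[OF b, of u]
    by (simp add: diff_frac_eq algebra_simps)
  also have "\<dots> = (b\<^sup>2 - 1/4) * of_real u / ((of_real u ^ 2 + b ^ 2) * of_real (u\<^sup>2 + 1/4))"
    by (simp add: power2_eq_square mult.commute)
  finally show ?thesis unfolding diff_kernel_def by simp
qed

lemma K_C_eq_diff_kernel:
  assumes "Re s > 1/2"
  shows "K_C s u = diff_kernel (s - 1/2) u"
proof -
  have b: "Re (s - 1/2) > 0" using assms by simp
  have "(s - 1/2)\<^sup>2 - 1/4 = s * (s - 1)" by (simp add: algebra_simps power2_eq_square)
  thus ?thesis unfolding K_C_def diff_kernel_closed_form[OF b] by simp
qed

lemma diff_kernel_continuous: "Re b > 0 \<Longrightarrow> continuous_on S (diff_kernel b)"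
  unfolding diff_kernel_def[abs_def]
  by (intro continuous_intros) (auto simp: sq_plus_nonzero half_sq_plus_nonzero)

lemma diff_kernel_measurable [measurable]: "Re b > 0 \<Longrightarrow> diff_kernel b \<in> borel_measurable borel"
  by (rule borel_measurable_continuous_onI) (rule diff_kernel_continuous)

lemma norm_diff_kernel_le:
  assumes b: "Re b > 0" and u: "1 \<le> u"
  shows "norm (diff_kernel b u) \<le> ((2/pi) * cmod (b\<^sup>2 - 1/4) * (cmod b / Re b)) / u ^ 3"
proof -
  define A where "A = (2/pi) * cmod (b\<^sup>2 - 1/4)"
  define R where "R = cmod b / Re b"
  define N where "N = cmod (1 / (of_real u ^ 2 + b ^ 2))"
  have A: "A \<ge> 0" unfolding A_def by simp
  have R: "R \<ge> 0" unfolding R_def using b by simp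
  have u0: "u > 0" using u by simp
  have "norm (diff_kernel b u) = A * u * N / (u\<^sup>2 + 1/4)"
  proof -
    have "norm (of_real (u\<^sup>2 + 1/4) :: complex) = u\<^sup>2 + 1/4"
      by (simp only: norm_of_real) (simp add: add_nonneg_pos)
    hence "norm (diff_kernel b u) = (2/pi) * (cmod (b\<^sup>2 - 1/4) * \<bar>u\<bar>)
                                 / (cmod (of_real u ^ 2 + b ^ 2) * (u\<^sup>2 + 1/4))"
      unfolding diff_kernel_closed_form[OF b] by (simp only: norm_mult norm_divide norm_of_real) simp
    thus ?thesis unfolding A_def N_def using u0 by (simp add: norm_divide field_simps)
  qed
  also have "\<dots> \<le> A * u * (R / u\<^sup>2) / (u\<^sup>2 + 1/4)"
  proof -
    have "N \<le> R / (u\<^sup>2 + (cmod b)\<^sup>2)" unfolding N_def R_def by (rule norm_inverse_sq_plus_le[OF b])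
    also have "\<dots> \<le> R / u\<^sup>2" using R u0 by (intro divide_left_mono) (auto simp: add_pos_nonneg)
    finally show ?thesis using A u0 by (intro divide_right_mono mult_left_mono) auto
  qed
  also have "\<dots> \<le> A * u * (R / u\<^sup>2) / u\<^sup>2"
    using A u0 R by (intro divide_left_mono) (auto intro!: mult_nonneg_nonneg mult_pos_pos add_pos_pos)
  also have "\<dots> = A * R / u ^ 3" using u0 by (simp add: field_simps power2_eq_square power3_eq_cube)
  finally show ?thesis unfolding A_def R_def by simp
qed

(* The weight 1 + u + u^(3/2) dominates the partial sums of vartheta (see abs_theta_partial_le);
   against the kernel it still leaves an integrable function, decaying like u^(-3/2). *)
definition kernel_majorant :: "complex \<Rightarrow> real \<Rightarrow> real" where
  "kernel_majorant b u = (1 + u + u * sqrt u) * norm (diff_kernel b u)"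

lemma norm_diff_kernel_le_majorant: "u \<ge> 0 \<Longrightarrow> norm (diff_kernel b u) \<le> kernel_majorant b u"
  unfolding kernel_majorant_def by (simp add: mult_le_cancel_right1)

lemma set_integrable_kernel_majorant:
  assumes b: "Re b > 0"
  shows "set_integrable lborel {0<..} (kernel_majorant b)"
proof -
  define K where "K = (2/pi) * cmod (b\<^sup>2 - 1/4) * (cmod b / Re b)"
  show ?thesis
  proof (rule set_integrable_Ioi_decay[where C="3 * K"])
    show "continuous_on {0..} (kernel_majorant b)"
      unfolding kernel_majorant_def[abs_def]
      by (intro continuous_intros continuous_on_norm diff_kernel_continuous b)
    fix u :: real assume u: "1 \<le> u"
    have u_le: "u \<le> u * sqrt u" using u by (simp add: mult_le_cancel_left1)
    hence weight_le: "1 + u + u * sqrt u \<le> 3 * (u * sqrt u)" using u by linarith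
    have "norm (kernel_majorant b u) = (1 + u + u * sqrt u) * norm (diff_kernel b u)"
      unfolding kernel_majorant_def using u by (simp add: abs_mult)
    also have "\<dots> \<le> (3 * (u * sqrt u)) * (K / u ^ 3)"
      unfolding K_def using u weight_le norm_diff_kernel_le[OF b u] by (intro mult_mono) auto
    also have "\<dots> = 3 * K / (u * sqrt u)"
    proof -
      have "u ^ 3 = (u * sqrt u) * (u * sqrt u)" using u by (simp add: power3_eq_cube algebra_simps)
      thus ?thesis using u by (simp add: field_simps)
    qed
    finally show "norm (kernel_majorant b u) \<le> 3 * K / (u * sqrt u)" .
  qed simp
qed

lemma set_integrable_dominated_by_majorant:
  fixes g :: "real \<Rightarrow> 'a::{banach, second_countable_topology}"
  assumes b: "Re b > 0" and g: "g \<in> borel_measurable borel"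
    and bound: "\<And>u. u > 0 \<Longrightarrow> norm (g u) \<le> C * kernel_majorant b u"
  shows "set_integrable lborel {0<..} g"
proof (rule set_integrable_bound)
  show "set_integrable lborel {0<..} (\<lambda>u. C * kernel_majorant b u)"
    using set_integrable_kernel_majorant[OF b] by (rule set_integrable_mult_right)
  show "set_borel_measurable lborel {0<..} g"
    unfolding set_borel_measurable_def using g by measurable
  have "norm (g u) \<le> norm (C * kernel_majorant b u)" if "u > 0" for u
    using bound[OF that] by (rule order_trans) simp
  thus "AE u\<in>{0<..} in lborel. norm (g u) \<le> norm (C * kernel_majorant b u)" by (auto intro!: AE_I2)
qed


section \<open>Moments of the kernel\<close>

lemma Re_half_pos: "Re (1/2 :: complex) > 0" by simp

lemma integral_id_diff_kernel:
  assumes b: "Re b > 0"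
  shows "set_integrable lborel {0<..} (\<lambda>u. of_real u * diff_kernel b u)"
    and "(LBINT u:{0<..}. of_real u * diff_kernel b u) = b - 1/2"
proof -
  have split: "of_real u * diff_kernel b u = (2 / of_real pi) *
      (b\<^sup>2 * (1 / (of_real u ^ 2 + b\<^sup>2)) - (1/2)\<^sup>2 * (1 / (of_real u ^ 2 + (1/2)\<^sup>2)))" for u :: real
    using half_sq_plus_nonzero[of u] sq_plus_nonzero[OF b, of u]
    unfolding diff_kernel_def by (simp add: field_simps power2_eq_square)
  have int_b: "set_integrable lborel {0<..} (\<lambda>u::real. b\<^sup>2 * (1 / (of_real u ^ 2 + b\<^sup>2)))"
    by (rule set_integrable_mult_right) (rule set_integrable_inverse_sq_plus[OF b])
  have int_half: "set_integrable lborel {0<..}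
      (\<lambda>u::real. (1/2::complex)\<^sup>2 * (1 / (of_real u ^ 2 + (1/2)\<^sup>2)))"
    by (rule set_integrable_mult_right) (rule set_integrable_inverse_sq_plus[OF Re_half_pos])
  show "set_integrable lborel {0<..} (\<lambda>u. of_real u * diff_kernel b u)"
    unfolding split by (rule set_integrable_mult_right) (rule set_integral_diff(1)[OF int_b int_half])
  have "(LBINT u:{0<..}. of_real u * diff_kernel b u)
      = (2 / of_real pi) * (b\<^sup>2 * (of_real pi / (2 * b)) - (1/2)\<^sup>2 * (of_real pi / (2 * (1/2))))"
    unfolding split set_integral_mult_right set_integral_diff(2)[OF int_b int_half]
      integral_inverse_sq_plus[OF b] integral_inverse_sq_plus[OF Re_half_pos] ..
  also have "\<dots> = b - 1/2" using b by (auto simp: field_simps power2_eq_square)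
  finally show "(LBINT u:{0<..}. of_real u * diff_kernel b u) = b - 1/2" .
qed

lemma integral_poisson_diff_kernel:
  assumes b: "Re b > 0" and x: "x > 0"
  shows "set_integrable lborel {0<..} (\<lambda>u. of_real (u / (u\<^sup>2 + x\<^sup>2)) * diff_kernel b u)"
    and "(LBINT u:{0<..}. of_real (u / (u\<^sup>2 + x\<^sup>2)) * diff_kernel b u)
           = 1 / (of_real x + 1/2) - 1 / (of_real x + b)"
proof -
  define P where "P c u = of_real u ^ 2 / ((of_real u ^ 2 + of_real x ^ 2) * (of_real u ^ 2 + c ^ 2))"
    for c :: complex and u :: real
  have split: "of_real (u / (u\<^sup>2 + x\<^sup>2)) * diff_kernel b u = (2 / of_real pi) * (P (1/2) u - P b u)"
    for u :: real
    unfolding diff_kernel_def P_def by (simp add: right_diff_distrib power2_eq_square mult_ac)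
  have int_half: "set_integrable lborel {0<..} (P (1/2))"
    unfolding P_def[abs_def] by (rule set_integrable_sq_over_products[OF Re_half_pos])
  have int_b: "set_integrable lborel {0<..} (P b)"
    unfolding P_def[abs_def] by (rule set_integrable_sq_over_products[OF b])
  show "set_integrable lborel {0<..} (\<lambda>u. of_real (u / (u\<^sup>2 + x\<^sup>2)) * diff_kernel b u)"
    unfolding split by (rule set_integrable_mult_right) (rule set_integral_diff(1)[OF int_half int_b])
  have "(LBINT u:{0<..}. of_real (u / (u\<^sup>2 + x\<^sup>2)) * diff_kernel b u)
      = (2 / of_real pi) * (of_real pi / (2 * (of_real x + 1/2)) - of_real pi / (2 * (of_real x + b)))"
    unfolding split set_integral_mult_right set_integral_diff(2)[OF int_half int_b]
    unfolding P_def integral_sq_over_products[OF b x] integral_sq_over_products[OF Re_half_pos x] ..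
  also have "\<dots> = 1 / (of_real x + 1/2) - 1 / (of_real x + b)"
  proof -
    have cancel: "(2 / p) * (p / (2 * A) - p / (2 * B)) = 1 / A - 1 / B"
      if "p \<noteq> 0" "A \<noteq> 0" "B \<noteq> 0" for p A B :: complex
      using that by (simp add: field_simps)
    show ?thesis by (rule cancel) (use x b in \<open>auto simp: complex_eq_iff\<close>)
  qed
  finally show "(LBINT u:{0<..}. of_real (u / (u\<^sup>2 + x\<^sup>2)) * diff_kernel b u)
      = 1 / (of_real x + 1/2) - 1 / (of_real x + b)" .
qed

lemma integral_Ioi_poisson:
  fixes u a :: real assumes u: "u > 0" and a: "a > 0"
  shows "set_integrable lborel {a<..} (\<lambda>x. u / (u\<^sup>2 + x\<^sup>2))"
    and "(LBINT x:{a<..}. u / (u\<^sup>2 + x\<^sup>2)) = arctan (u / a)"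
proof -
  have pos: "u\<^sup>2 + x\<^sup>2 > 0" for x using u by (simp add: add_pos_nonneg)
  have deriv: "((\<lambda>x. arctan (x / u)) has_real_derivative u / (u\<^sup>2 + x\<^sup>2)) (at x)" for x
  proof -
    have "((\<lambda>x. arctan (x / u)) has_real_derivative inverse (1 + (x / u)\<^sup>2) * (1 / u)) (at x)"
      using u by (intro DERIV_chain2[OF DERIV_arctan]) (auto intro!: derivative_eq_intros)
    moreover have "inverse (1 + (x / u)\<^sup>2) * (1 / u) = u / (u\<^sup>2 + x\<^sup>2)"
      using u pos[of x] by (simp add: field_simps power2_eq_square)
    ultimately show ?thesis by simp
  qed
  have lim_a: "(((\<lambda>x. arctan (x / u)) \<circ> real_of_ereal) \<longlongrightarrow> arctan (a / u)) (at_right (ereal a))"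
    unfolding ereal_tendsto_simps using u by (auto intro!: tendsto_eq_intros)
  have lim_top: "(((\<lambda>x. arctan (x / u)) \<circ> real_of_ereal) \<longlongrightarrow> pi/2) (at_left \<infinity>)"
    unfolding ereal_tendsto_simps using u by real_asymp
  have Ioi: "einterval (ereal a) \<infinity> = {a<..}" by (auto simp: einterval_def)
  have "set_integrable lborel (einterval (ereal a) \<infinity>) (\<lambda>x. u / (u\<^sup>2 + x\<^sup>2))"
       "(LBINT x=ereal a..\<infinity>. u / (u\<^sup>2 + x\<^sup>2)) = pi/2 - arctan (a / u)"
    by (rule interval_integral_FTC_nonneg[OF _ deriv _ _ lim_a lim_top];
        use u pos in \<open>auto intro!: continuous_intros\<close>)+
  moreover have "pi/2 - arctan (a / u) = arctan (u / a)"
    using arctan_inverse[of "a / u"] u a by simp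
  ultimately show "set_integrable lborel {a<..} (\<lambda>x. u / (u\<^sup>2 + x\<^sup>2))"
    and "(LBINT x:{a<..}. u / (u\<^sup>2 + x\<^sup>2)) = arctan (u / a)"
    unfolding Ioi by (simp_all add: interval_integral_to_infinity_eq)
qed

lemma shifted_nonzero:
  fixes c :: complex assumes "Re c > 0" "x \<ge> 0"
  shows "of_real x + c \<noteq> 0"
  using assms by (auto simp: complex_eq_iff)

(* 1/(x + 1/2) - 1/(x + b) = (b - 1/2)/((x + 1/2)(x + b)) is O(x^-2), hence integrable. *)
lemma set_integrable_Ioi_inverse_difference:
  fixes b :: complex and a :: real
  assumes b: "Re b > 0" and a: "a \<ge> 0"
  shows "set_integrable lborel {a<..} (\<lambda>x::real. 1 / (of_real x + 1/2) - 1 / (of_real x + b))"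
proof (rule set_integrable_Ioi_decay[OF a, where C="cmod (b - 1/2)"])
  note nz = shifted_nonzero[OF Re_half_pos] shifted_nonzero[OF b]
  show "continuous_on {a..} (\<lambda>x::real. 1 / (of_real x + 1/2) - 1 / (of_real x + b))"
    using a nz by (intro continuous_intros) auto
  fix x :: real assume x: "1 \<le> x"
  have "1 / (of_real x + 1/2) - 1 / (of_real x + b) = (b - 1/2) / ((of_real x + 1/2) * (of_real x + b))"
    using nz[of x] x by (simp add: diff_frac_eq)
  hence "cmod (1 / (of_real x + 1/2) - 1 / (of_real x + b))
      = cmod (b - 1/2) / (cmod (of_real x + 1/2) * cmod (of_real x + b))"
    by (simp add: norm_divide norm_mult)
  also have "\<dots> \<le> cmod (b - 1/2) / (x * x)"
  proof -
    have "x \<le> cmod (of_real x + 1/2)" "x \<le> cmod (of_real x + b)"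
      using complex_Re_le_cmod[of "of_real x + 1/2"] complex_Re_le_cmod[of "of_real x + b"] b by auto
    thus ?thesis using x by (intro divide_left_mono mult_mono mult_pos_pos) auto
  qed
  also have "\<dots> \<le> cmod (b - 1/2) / (x * sqrt x)"
    using x real_sqrt_le_self[OF x] by (intro divide_left_mono mult_left_mono mult_pos_pos) auto
  finally show "cmod (1 / (of_real x + 1/2) - 1 / (of_real x + b)) \<le> cmod (b - 1/2) / (x * sqrt x)" .
qed

lemma shifted_ratio_notin_nonpos_Reals:
  fixes b :: complex assumes b: "Re b > 0" and x: "x \<ge> 0"
  shows "(of_real x + b) / (of_real x + 1/2) \<notin> \<real>\<^sub>\<le>\<^sub>0"
proof -
  have "Re ((of_real x + b) / (of_real x + 1/2)) = (x + Re b) / (x + 1/2)"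
    using Re_divide_of_real[of "of_real x + b" "x + 1/2"] by simp
  moreover have "(x + Re b) / (x + 1/2) > 0" using b x by simp
  ultimately show ?thesis by (simp add: complex_nonpos_Reals_iff)
qed

lemma has_vector_derivative_log_ratio:
  fixes b :: complex and x :: real
  assumes b: "Re b > 0" and x: "x \<ge> 0"
  shows "((\<lambda>x. - Ln ((of_real x + b) / (of_real x + 1/2))) has_vector_derivative
           1 / (of_real x + 1/2) - 1 / (of_real x + b)) (at x)"
proof -
  have nz: "of_real x + 1/2 \<noteq> (0::complex)" "of_real x + b \<noteq> 0"
    using shifted_nonzero[OF Re_half_pos x] shifted_nonzero[OF b x] by simp_all
  have "((\<lambda>z. - Ln ((z + b) / (z + 1/2))) has_field_derivative
      - (inverse ((of_real x + b) / (of_real x + 1/2))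
         * ((1 * (of_real x + 1/2) - (of_real x + b) * 1) / ((of_real x + 1/2) * (of_real x + 1/2)))))
      (at (of_real x))"
    using nz shifted_ratio_notin_nonpos_Reals[OF b x]
    by (intro DERIV_minus DERIV_chain2[OF has_field_derivative_Ln] DERIV_divide)
       (auto intro!: derivative_eq_intros)
  also have "- (inverse ((of_real x + b) / (of_real x + 1/2))
         * ((1 * (of_real x + 1/2) - (of_real x + b) * 1) / ((of_real x + 1/2) * (of_real x + 1/2))))
      = 1 / (of_real x + 1/2) - 1 / (of_real x + b)"
  proof -
    have quotient_rule: "- (inverse (q / p) * ((1 * p - q * 1) / (p * p))) = 1 / p - 1 / q"
      if "p \<noteq> 0" "q \<noteq> 0" for p q :: complex
      using that by (simp add: field_simps)
    show ?thesis by (rule quotient_rule[OF nz])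
  qed
  finally show ?thesis by (rule has_vector_derivative_real_field)
qed

lemma tendsto_log_ratio:
  fixes b :: complex
  shows "((\<lambda>x. - Ln ((of_real x + b) / (of_real x + 1/2))) \<longlongrightarrow> 0) at_top"
proof -
  have "eventually (\<lambda>x. (of_real x + b) / (of_real x + 1/2) = 1 + (b - 1/2) * of_real (1 / (x + 1/2)))
      at_top"
    using eventually_ge_at_top[of 0]
  proof eventually_elim
    case (elim x)
    have "(P + d) / P = 1 + d * (1 / P)" if "P \<noteq> 0" for P d :: complex
      using that by (simp add: field_simps)
    from this[OF shifted_nonzero[OF Re_half_pos elim], of "b - 1/2"] show ?case by simp
  qed
  moreover have "((\<lambda>x. 1 + (b - 1/2) * of_real (1 / (x + 1/2))) \<longlongrightarrow> 1 + (b - 1/2) * of_real 0) at_top"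
    by (intro tendsto_intros) real_asymp
  ultimately have "((\<lambda>x. (of_real x + b) / (of_real x + 1/2)) \<longlongrightarrow> 1) at_top"
    by (simp add: tendsto_cong)
  hence "((\<lambda>x. - Ln ((of_real x + b) / (of_real x + 1/2))) \<longlongrightarrow> - Ln 1) at_top"
    by (intro tendsto_intros tendsto_Ln) auto
  thus ?thesis by simp
qed

lemma integral_Ioi_log_ratio:
  fixes b :: complex and a :: real
  assumes b: "Re b > 0" and a: "a > 0"
  shows "(LBINT x:{a<..}. 1 / (of_real x + 1/2) - 1 / (of_real x + b))
           = Ln ((of_real a + b) / (of_real a + 1/2))"
proof -
  let ?F = "\<lambda>x. - Ln ((of_real x + b) / (of_real x + 1/2))"
  have "(LBINT x=ereal a..\<infinity>. 1 / (of_real x + 1/2) - 1 / (of_real x + b)) = 0 - ?F a"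
  proof (rule interval_integral_FTC_integrable[where F="?F"])
    fix x assume "ereal a < ereal x"
    hence x: "x \<ge> 0" using a by simp
    show "(?F has_vector_derivative 1 / (of_real x + 1/2) - 1 / (of_real x + b)) (at x)"
      by (rule has_vector_derivative_log_ratio[OF b x])
    show "isCont (\<lambda>x. 1 / (complex_of_real x + 1 / 2) - 1 / (complex_of_real x + b)) x"
      using shifted_nonzero[OF Re_half_pos x] shifted_nonzero[OF b x]
      by (auto intro!: continuous_intros)
  next
    have "einterval (ereal a) \<infinity> = {a<..}" by (auto simp: einterval_def)
    thus "set_integrable lborel (einterval (ereal a) \<infinity>)
        (\<lambda>x. 1 / (complex_of_real x + 1 / 2) - 1 / (complex_of_real x + b))"
      using set_integrable_Ioi_inverse_difference[OF b] a by simp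
    have "isCont ?F a"
      using has_vector_derivative_log_ratio[OF b, of a] a by (intro has_vector_derivative_continuous) auto
    thus "((?F \<circ> real_of_ereal) \<longlongrightarrow> ?F a) (at_right (ereal a))"
      unfolding ereal_tendsto_simps by (simp add: isCont_def filterlim_at_split)
    show "((?F \<circ> real_of_ereal) \<longlongrightarrow> 0) (at_left \<infinity>)"
      unfolding ereal_tendsto_simps by (rule tendsto_log_ratio)
  qed auto
  thus ?thesis by (simp add: interval_integral_to_infinity_eq)
qed

(* |arctan| <= pi/2, so arctan (u/a) times the kernel is dominated by the majorant. *)
lemma set_integrable_arctan_diff_kernel:
  assumes b: "Re b > 0" and a: "a > 0"
  shows "set_integrable lborel {0<..} (\<lambda>u. of_real (arctan (u / a)) * diff_kernel b u)"
    and "set_integrable lborel {0<..} (\<lambda>u. arctan (u / a) * norm (diff_kernel b u))"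
proof -
  have bound: "\<bar>arctan (u / a)\<bar> * norm (diff_kernel b u) \<le> pi/2 * kernel_majorant b u" if "u > 0" for u
    using arctan_bounded[of "u / a"] norm_diff_kernel_le_majorant[of u b] that
    by (intro mult_mono) auto
  note [measurable] = diff_kernel_measurable[OF b]
  show "set_integrable lborel {0<..} (\<lambda>u. of_real (arctan (u / a)) * diff_kernel b u)"
    using bound by (intro set_integrable_dominated_by_majorant[OF b, where C="pi/2"])
      (auto simp: norm_mult)
  show "set_integrable lborel {0<..} (\<lambda>u. arctan (u / a) * norm (diff_kernel b u))"
    using bound by (intro set_integrable_dominated_by_majorant[OF b, where C="pi/2"])
      (auto simp: abs_mult)
qed

(* int_0^oo arctan (u/a) diff_kernel b u du = Ln ((a + b)/(a + 1/2)): write arctan (u/a) as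
   int_a^oo u/(u^2 + x^2) dx and exchange the order of integration. *)
lemma integral_arctan_diff_kernel:
  assumes b: "Re b > 0" and a: "a > 0"
  shows "(LBINT u:{0<..}. of_real (arctan (u / a)) * diff_kernel b u)
           = Ln ((of_real a + b) / (of_real a + 1/2))"
proof -
  (* f u x = [u > 0] [x > a] u/(u^2 + x^2) diff_kernel b u: integrating out x gives
     arctan (u/a) diff_kernel b u, integrating out u gives 1/(x + 1/2) - 1/(x + b). *)
  define w where "w u x = indicator {0<..} u * indicator {a<..} x * (u / (u\<^sup>2 + x\<^sup>2))" for u x :: real
  define f where "f u x = w u x *\<^sub>R diff_kernel b u" for u x :: real
  have w_nonneg: "w u x \<ge> 0" for u x unfolding w_def by (simp add: indicator_def)
  have w_integrable: "integrable lborel (\<lambda>x. w u x)" for u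
    using integral_Ioi_poisson(1)[OF _ a, of u]
    by (cases "u > 0") (simp_all add: w_def set_integrable_def mult.assoc)
  have w_integral: "(\<integral>x. w u x \<partial>lborel) = indicator {0<..} u * arctan (u / a)" for u
    using integral_Ioi_poisson(2)[OF _ a, of u]
    by (cases "u > 0") (simp_all add: w_def set_lebesgue_integral_def mult.assoc)
  note [measurable] = diff_kernel_measurable[OF b]
  have integrable_f: "integrable (lborel \<Otimes>\<^sub>M lborel) (\<lambda>(u, x). f u x)"
  proof (rule lborel_pair.Fubini_integrable)
    show "(\<lambda>(u, x). f u x) \<in> borel_measurable (lborel \<Otimes>\<^sub>M lborel)"
      unfolding f_def w_def by measurable
    have "(\<integral>x. norm (f u x) \<partial>lborel)
        = indicator {0<..} u * (arctan (u / a) * norm (diff_kernel b u))" for u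
      unfolding f_def using w_nonneg
      by (simp add: integral_mult_left_zero w_integral)
    thus "integrable lborel (\<lambda>u. \<integral>x. norm ((\<lambda>(u, x). f u x) (u, x)) \<partial>lborel)"
      using set_integrable_arctan_diff_kernel(2)[OF b a] by (simp add: set_integrable_def)
    show "AE u in lborel. integrable lborel (\<lambda>x. (\<lambda>(u, x). f u x) (u, x))"
      unfolding f_def using w_integrable by simp
  qed
  have inner_x: "(\<integral>x. f u x \<partial>lborel) = indicator {0<..} u *\<^sub>R (of_real (arctan (u / a)) * diff_kernel b u)"
    for u
    unfolding f_def using w_integrable
    by (simp add: integral_scaleR_left w_integral scaleR_conv_of_real)
  have inner_u: "(\<integral>u. f u x \<partial>lborel) = indicator {a<..} x *\<^sub>R (1 / (of_real x + 1/2) - 1 / (of_real x + b))"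
    for x
  proof (cases "x > a")
    case True
    hence "(\<integral>u. f u x \<partial>lborel)
        = (\<integral>u. indicator {0<..} u *\<^sub>R (of_real (u / (u\<^sup>2 + x\<^sup>2)) * diff_kernel b u) \<partial>lborel)"
      unfolding f_def w_def
      by (intro Bochner_Integration.integral_cong) (auto simp: scaleR_conv_of_real split: split_indicator)
    also have "\<dots> = 1 / (of_real x + 1/2) - 1 / (of_real x + b)"
      using integral_poisson_diff_kernel(2)[OF b, of x] True a by (simp add: set_lebesgue_integral_def)
    finally show ?thesis using True by simp
  qed (simp add: f_def w_def)
  have "(\<integral>x. (\<integral>u. f u x \<partial>lborel) \<partial>lborel) = (\<integral>u. (\<integral>x. f u x \<partial>lborel) \<partial>lborel)"
    using lborel_pair.Fubini_integral[of f] integrable_f by simp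
  thus ?thesis
    unfolding inner_x inner_u integral_Ioi_log_ratio[OF b a, symmetric]
    by (simp add: set_lebesgue_integral_def)
qed


section \<open>The partial sums of vartheta\<close>

(* The k-th summand of vartheta and the n-th partial sum; arctan (2u) is written as
   arctan (u/(1/2)) to match the moment formula with a = 1/2. *)
definition theta_term :: "nat \<Rightarrow> real \<Rightarrow> real" where
  "theta_term k u = u / (2 * real (Suc k)) - arctan (u / (2 * real (Suc k) + 1/2))"

definition theta_partial :: "nat \<Rightarrow> real \<Rightarrow> real" where
  "theta_partial n u = - arctan (u / (1/2)) - u / 2 * (euler_mascheroni + ln pi)
     + (\<Sum>k<n. theta_term k u)"

(* arctan y <= y makes every summand nonnegative for u >= 0. *)
lemma theta_term_nonneg: "u \<ge> 0 \<Longrightarrow> 0 \<le> theta_term k u"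
proof -
  assume u: "u \<ge> 0"
  have "arctan (u / (2 * real (Suc k) + 1/2)) \<le> u / (2 * real (Suc k) + 1/2)"
    using u by (intro arctan_le_self) simp
  also have "\<dots> \<le> u / (2 * real (Suc k))" using u by (intro divide_left_mono) auto
  finally show ?thesis unfolding theta_term_def by simp
qed

(* y - arctan y <= y^(3/2): by the mean value theorem y - arctan y = y z^2/(1 + z^2) with
   0 < z < y, and z^2/(1 + z^2) <= min (z, 1) <= sqrt z. *)
lemma sub_arctan_le: assumes y: "y \<ge> 0" shows "y - arctan y \<le> y * sqrt y"
proof (cases "y = 0")
  case False
  hence y0: "y > 0" using y by simp
  have deriv: "\<And>x. 0 \<le> x \<Longrightarrow> x \<le> y \<Longrightarrow>
      ((\<lambda>y. y - arctan y) has_real_derivative 1 - inverse (1 + x\<^sup>2)) (at x)"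
    by (auto intro!: derivative_eq_intros)
  obtain z where z: "0 < z" "z < y"
    and mvt: "(y - arctan y) - (0 - arctan 0) = (y - 0) * (1 - inverse (1 + z\<^sup>2))"
    using MVT2[OF y0 deriv] by blast
  have pos: "1 + z\<^sup>2 > 0" by (simp add: add_pos_nonneg)
  have "1 - inverse (1 + z\<^sup>2) = z\<^sup>2 / (1 + z\<^sup>2)" using pos by (simp add: field_simps)
  also have "\<dots> \<le> sqrt z"
  proof (cases "z \<le> 1")
    case True
    have z_sq: "z\<^sup>2 \<le> z" using True z by (simp add: power2_eq_square mult_le_one)
    have "z\<^sup>2 / (1 + z\<^sup>2) \<le> z\<^sup>2 / 1" using pos by (intro divide_left_mono) auto
    also have "\<dots> \<le> z" using z_sq by simp
    also have "z \<le> sqrt z" using z_sq by (rule real_le_rsqrt)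
    finally show ?thesis .
  next
    case False
    have "z\<^sup>2 / (1 + z\<^sup>2) \<le> 1" using pos by simp
    also have "1 \<le> sqrt z" using False by simp
    finally show ?thesis .
  qed
  also have "sqrt z \<le> sqrt y" using z by simp
  finally have "1 - inverse (1 + z\<^sup>2) \<le> sqrt y" .
  hence "y * (1 - inverse (1 + z\<^sup>2)) \<le> y * sqrt y" using y by (rule mult_left_mono)
  thus ?thesis using mvt by simp
qed simp

(* Each term is O((u + u^(3/2)) k^(-3/2)): the two pieces are
   u/(2k) - u/(2k + 1/2) <= u/k^(3/2) and y - arctan y <= y^(3/2) with y <= u/k. *)
lemma theta_term_le:
  assumes u: "u \<ge> 0"
  shows "theta_term k u \<le> (u + u * sqrt u) * (1 / (real (Suc k) * sqrt (real (Suc k))))"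
proof -
  define m where "m = real (Suc k)"
  have m: "m \<ge> 1" unfolding m_def by simp
  define y where "y = u / (2 * m + 1/2)"
  have y: "y \<ge> 0" unfolding y_def using u m by simp
  have y_le: "y \<le> u / m" unfolding y_def using u m by (intro divide_left_mono) auto
  have "u / (2 * m) - y = u / (2 * m * (4 * m + 1))" unfolding y_def using m by (simp add: field_simps)
  also have "\<dots> \<le> u / (m * sqrt m)"
    using u m real_sqrt_le_self[OF m] by (intro divide_left_mono mult_mono) (auto intro!: mult_pos_pos)
  finally have first: "u / (2 * m) - y \<le> u * (1 / (m * sqrt m))" by simp
  have "y - arctan y \<le> y * sqrt y" by (rule sub_arctan_le[OF y])
  also have "\<dots> \<le> (u / m) * sqrt (u / m)" using y_le y by (intro mult_mono) auto
  also have "\<dots> = u * sqrt u * (1 / (m * sqrt m))" using m by (simp add: real_sqrt_divide)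
  finally have second: "y - arctan y \<le> u * sqrt u * (1 / (m * sqrt m))" .
  have "theta_term k u = (u / (2 * m) - y) + (y - arctan y)"
    unfolding theta_term_def y_def m_def by simp
  also have "\<dots> \<le> (u + u * sqrt u) * (1 / (m * sqrt m))"
    using first second by (simp only: distrib_right)
  finally show ?thesis unfolding m_def .
qed

lemma summable_inverse_three_halves: "summable (\<lambda>k. 1 / (real (Suc k) * sqrt (real (Suc k))))"
proof -
  have "summable (\<lambda>n. real n powr (- (3/2)))" by (rule summable_real_powr_iff[THEN iffD2]) simp
  hence "summable (\<lambda>k. real (Suc k) powr (- (3/2)))" by (rule summable_Suc_iff[THEN iffD2])
  moreover have "real (Suc k) powr (- (3/2)) = 1 / (real (Suc k) * sqrt (real (Suc k)))" for k
  proof -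
    have "real (Suc k) powr (3/2) = real (Suc k) powr (1 + 1/2)" by simp
    also have "\<dots> = real (Suc k) * sqrt (real (Suc k))" by (simp only: powr_add powr_half_sqrt) simp
    finally show ?thesis by (simp add: powr_minus_divide)
  qed
  ultimately show ?thesis by simp
qed

definition zeta_three_halves :: real where
  "zeta_three_halves = (\<Sum>k. 1 / (real (Suc k) * sqrt (real (Suc k))))"

lemma summable_theta_term: "u \<ge> 0 \<Longrightarrow> summable (\<lambda>k. theta_term k u)"
  by (rule summable_comparison_test'[OF summable_mult[OF summable_inverse_three_halves]])
     (use theta_term_nonneg theta_term_le in auto)

lemma sum_theta_term_le: "u \<ge> 0 \<Longrightarrow> (\<Sum>k<n. theta_term k u) \<le> (u + u * sqrt u) * zeta_three_halves"
proof -
  assume u: "u \<ge> 0"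
  have "(\<Sum>k<n. theta_term k u) \<le> (\<Sum>k<n. (u + u * sqrt u) * (1 / (real (Suc k) * sqrt (real (Suc k)))))"
    by (intro sum_mono theta_term_le u)
  also have "\<dots> \<le> (\<Sum>k. (u + u * sqrt u) * (1 / (real (Suc k) * sqrt (real (Suc k)))))"
    using u by (intro sum_le_suminf summable_mult summable_inverse_three_halves) auto
  also have "\<dots> = (u + u * sqrt u) * zeta_three_halves"
    unfolding zeta_three_halves_def by (rule suminf_mult[OF summable_inverse_three_halves])
  finally show ?thesis .
qed

lemma tendsto_theta_partial: "u \<ge> 0 \<Longrightarrow> (\<lambda>n. theta_partial n u) \<longlonglongrightarrow> vartheta u"
proof -
  assume u: "u \<ge> 0"
  have "(\<lambda>n. theta_partial n u) \<longlonglongrightarrow>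
      - arctan (u / (1/2)) - u / 2 * (euler_mascheroni + ln pi) + (\<Sum>k. theta_term k u)"
    unfolding theta_partial_def by (intro tendsto_intros summable_LIMSEQ summable_theta_term u)
  thus ?thesis unfolding vartheta_def theta_term_def by (simp add: mult.commute)
qed

lemma theta_partial_measurable [measurable]: "theta_partial n \<in> borel_measurable borel"
  by (rule borel_measurable_continuous_onI)
     (auto simp: theta_partial_def[abs_def] theta_term_def intro!: continuous_intros)

definition theta_bound_const :: real where
  "theta_bound_const = pi/2 + \<bar>euler_mascheroni + ln pi\<bar>/2 + zeta_three_halves"

lemma abs_theta_partial_le:
  assumes u: "u > 0"
  shows "\<bar>theta_partial n u\<bar> \<le> theta_bound_const * (1 + u + u * sqrt u)"
proof -
  define C where "C = euler_mascheroni + ln pi"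
  have uu: "u * sqrt u \<ge> 0" using u by simp
  have zeta: "zeta_three_halves \<ge> 0"
    unfolding zeta_three_halves_def by (intro suminf_nonneg summable_inverse_three_halves) auto
  have arctan: "\<bar>arctan (u / (1/2))\<bar> \<le> pi/2" using arctan_bounded[of "u / (1/2)"] by auto
  have linear: "\<bar>u / 2 * C\<bar> = u * (\<bar>C\<bar>/2)" using u by (simp add: abs_mult)
  have sum_nonneg: "0 \<le> (\<Sum>k<n. theta_term k u)" using u by (intro sum_nonneg theta_term_nonneg) auto
  have "\<bar>theta_partial n u\<bar> \<le> pi/2 + u * (\<bar>C\<bar>/2) + (u + u * sqrt u) * zeta_three_halves"
    unfolding theta_partial_def C_def[symmetric]
    using arctan linear sum_nonneg sum_theta_term_le[of u n] u by linarith
  also have "\<dots> \<le> (pi/2 + \<bar>C\<bar>/2 + zeta_three_halves) * (1 + u + u * sqrt u)"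
  proof -
    have "pi/2 \<le> pi/2 * (1 + u + u * sqrt u)" using u uu by (simp add: mult_le_cancel_left1)
    moreover have "\<bar>C\<bar>/2 * u \<le> \<bar>C\<bar>/2 * (1 + u + u * sqrt u)"
      using uu by (intro mult_left_mono) auto
    moreover have "(u + u * sqrt u) * zeta_three_halves \<le> zeta_three_halves * (1 + u + u * sqrt u)"
      using zeta by (simp add: mult.commute mult_left_mono)
    moreover have "(pi/2 + \<bar>C\<bar>/2 + zeta_three_halves) * (1 + u + u * sqrt u)
        = pi/2 * (1 + u + u * sqrt u) + \<bar>C\<bar>/2 * (1 + u + u * sqrt u)
          + zeta_three_halves * (1 + u + u * sqrt u)"
      by (simp only: distrib_right)
    moreover have "u * (\<bar>C\<bar>/2) = \<bar>C\<bar>/2 * u" by (rule mult.commute)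
    ultimately show ?thesis by linarith
  qed
  finally show ?thesis unfolding theta_bound_const_def C_def .
qed


section \<open>Integrating the partial sums\<close>

(* The closed form of the integral of theta_partial n against K_C s, assembled from the
   moments of the kernel. *)
definition theta_integral :: "complex \<Rightarrow> nat \<Rightarrow> complex" where
  "theta_integral s n = - Ln s - of_real ((euler_mascheroni + ln pi) / 2) * (s - 1)
     + (\<Sum>k<n. (s - 1) / (2 * of_nat (Suc k))
                - Ln ((2 * of_nat (Suc k) + s) / (2 * of_nat (Suc k) + 1)))"

lemma integral_theta_term:
  assumes s: "Re s > 1/2"
  shows "set_integrable lborel {0<..} (\<lambda>u. of_real (theta_term k u) * diff_kernel (s - 1/2) u)"
    and "(LBINT u:{0<..}. of_real (theta_term k u) * diff_kernel (s - 1/2) u)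
           = (s - 1) / (2 * of_nat (Suc k)) - Ln ((2 * of_nat (Suc k) + s) / (2 * of_nat (Suc k) + 1))"
proof -
  define b where "b = s - 1/2"
  have b: "Re b > 0" unfolding b_def using s by simp
  define m where "m = real (Suc k)"
  have a: "2 * m + 1/2 > 0" unfolding m_def by simp
  have split: "of_real (theta_term k u) * diff_kernel b u
      = of_real (1 / (2 * m)) * (of_real u * diff_kernel b u)
        - of_real (arctan (u / (2 * m + 1/2))) * diff_kernel b u" for u
    unfolding theta_term_def m_def by (simp add: algebra_simps)
  have int_id: "set_integrable lborel {0<..} (\<lambda>u. of_real (1 / (2 * m)) * (of_real u * diff_kernel b u))"
    by (rule set_integrable_mult_right) (rule integral_id_diff_kernel(1)[OF b])
  note int_arctan = set_integrable_arctan_diff_kernel(1)[OF b a]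
  show "set_integrable lborel {0<..} (\<lambda>u. of_real (theta_term k u) * diff_kernel (s - 1/2) u)"
    unfolding b_def[symmetric] split by (rule set_integral_diff(1)[OF int_id int_arctan])
  have integral: "(LBINT u:{0<..}. of_real (theta_term k u) * diff_kernel b u)
      = of_real (1 / (2 * m)) * (b - 1/2) - Ln ((of_real (2 * m + 1/2) + b) / (of_real (2 * m + 1/2) + 1/2))"
    unfolding split set_integral_diff(2)[OF int_id int_arctan] set_integral_mult_right
      integral_id_diff_kernel(2)[OF b] integral_arctan_diff_kernel[OF b a] ..
  have shifts: "of_real (2 * m + 1/2) + b = 2 * of_nat (Suc k) + s"
    "of_real (2 * m + 1/2) + 1/2 = 2 * of_nat (Suc k) + (1::complex)"
    "of_real (1 / (2 * m)) * (b - 1/2) = (s - 1) / (2 * of_nat (Suc k))"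
    unfolding m_def b_def by simp_all
  show "(LBINT u:{0<..}. of_real (theta_term k u) * diff_kernel (s - 1/2) u)
      = (s - 1) / (2 * of_nat (Suc k)) - Ln ((2 * of_nat (Suc k) + s) / (2 * of_nat (Suc k) + 1))"
    using integral[unfolded shifts] unfolding b_def .
qed

lemma integral_theta_partial_zero:
  assumes s: "Re s > 1/2"
  shows "set_integrable lborel {0<..} (\<lambda>u. of_real (theta_partial 0 u) * diff_kernel (s - 1/2) u)"
    and "(LBINT u:{0<..}. of_real (theta_partial 0 u) * diff_kernel (s - 1/2) u)
           = - Ln s - of_real ((euler_mascheroni + ln pi) / 2) * (s - 1)"
proof -
  define b where "b = s - 1/2"
  have b: "Re b > 0" unfolding b_def using s by simp
  let ?c = "of_real ((euler_mascheroni + ln pi) / 2) :: complex"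
  have a: "(0::real) < 1/2" by simp
  have split: "of_real (theta_partial 0 u) * diff_kernel b u
      = (-1) * (of_real (arctan (u / (1/2))) * diff_kernel b u) - ?c * (of_real u * diff_kernel b u)"
    for u unfolding theta_partial_def by (simp add: algebra_simps)
  have int_arctan: "set_integrable lborel {0<..}
      (\<lambda>u. (-1) * (of_real (arctan (u / (1/2))) * diff_kernel b u))"
    by (rule set_integrable_mult_right) (rule set_integrable_arctan_diff_kernel(1)[OF b a])
  have int_id: "set_integrable lborel {0<..} (\<lambda>u. ?c * (of_real u * diff_kernel b u))"
    by (rule set_integrable_mult_right) (rule integral_id_diff_kernel(1)[OF b])
  show "set_integrable lborel {0<..} (\<lambda>u. of_real (theta_partial 0 u) * diff_kernel (s - 1/2) u)"
    unfolding b_def[symmetric] split by (rule set_integral_diff(1)[OF int_arctan int_id])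
  have "(LBINT u:{0<..}. of_real (theta_partial 0 u) * diff_kernel b u)
      = (-1) * Ln ((of_real (1/2) + b) / (of_real (1/2) + 1/2)) - ?c * (b - 1/2)"
    unfolding split set_integral_diff(2)[OF int_arctan int_id] set_integral_mult_right
      integral_arctan_diff_kernel[OF b a] integral_id_diff_kernel(2)[OF b] ..
  thus "(LBINT u:{0<..}. of_real (theta_partial 0 u) * diff_kernel (s - 1/2) u)
      = - Ln s - ?c * (s - 1)"
    unfolding b_def by simp
qed

lemma integral_theta_partial:
  assumes s: "Re s > 1/2"
  shows "set_integrable lborel {0<..} (\<lambda>u. of_real (theta_partial n u) * diff_kernel (s - 1/2) u)
     \<and> (LBINT u:{0<..}. of_real (theta_partial n u) * diff_kernel (s - 1/2) u) = theta_integral s n"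
proof (induction n)
  case 0
  show ?case using integral_theta_partial_zero[OF s] unfolding theta_integral_def by simp
next
  case (Suc n)
  have split: "of_real (theta_partial (Suc n) u) * diff_kernel (s - 1/2) u
      = of_real (theta_partial n u) * diff_kernel (s - 1/2) u + of_real (theta_term n u) * diff_kernel (s - 1/2) u"
    for u unfolding theta_partial_def by (simp add: algebra_simps)
  note int_n = conjunct1[OF Suc] and int_term = integral_theta_term(1)[OF s, of n]
  have "(LBINT u:{0<..}. of_real (theta_partial (Suc n) u) * diff_kernel (s - 1/2) u)
      = theta_integral s n + ((s - 1) / (2 * of_nat (Suc n))
          - Ln ((2 * of_nat (Suc n) + s) / (2 * of_nat (Suc n) + 1)))"
    unfolding split set_integral_add(2)[OF int_n int_term] integral_theta_term(2)[OF s]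
    using Suc by simp
  also have "\<dots> = theta_integral s (Suc n)"
    unfolding theta_integral_def sum.lessThan_Suc by (simp only: add.assoc)
  finally show ?case using set_integral_add(1)[OF int_n int_term] unfolding split by simp
qed

lemma tendsto_integral_theta_partial:
  assumes b: "Re b > 0"
  shows "set_integrable lborel {0<..} (\<lambda>u. of_real (vartheta u) * diff_kernel b u)"
    and "(\<lambda>n. LBINT u:{0<..}. of_real (theta_partial n u) * diff_kernel b u)
           \<longlonglongrightarrow> (LBINT u:{0<..}. of_real (vartheta u) * diff_kernel b u)"
proof -
  define g where "g n u = indicator {0<..} u *\<^sub>R (of_real (theta_partial n u) * diff_kernel b u)" for n u
  define f where "f u = indicator {0<..} u *\<^sub>R (of_real (vartheta u) * diff_kernel b u)" for u
  define w where "w u = indicator {0<..} u *\<^sub>R (theta_bound_const * kernel_majorant b u)" for u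
  note [measurable] = diff_kernel_measurable[OF b]
  have g_measurable: "g n \<in> borel_measurable lborel" for n unfolding g_def by measurable
  have g_lim: "(\<lambda>n. g n u) \<longlonglongrightarrow> f u" for u
  proof (cases "u > 0")
    case True
    thus ?thesis unfolding g_def f_def
      by (simp add: tendsto_mult_right tendsto_of_real tendsto_theta_partial)
  qed (simp add: g_def f_def)
  have f_measurable: "f \<in> borel_measurable lborel"
    by (rule borel_measurable_LIMSEQ_metric[OF g_measurable g_lim])
  have w_integrable: "integrable lborel w"
    using set_integrable_mult_right[OF set_integrable_kernel_majorant[OF b], of theta_bound_const]
    unfolding w_def set_integrable_def .
  have g_bound: "norm (g n u) \<le> w u" for n u
  proof (cases "u > 0")
    case True
    have "norm (of_real (theta_partial n u) * diff_kernel b u) = \<bar>theta_partial n u\<bar> * norm (diff_kernel b u)"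
      by (simp add: norm_mult)
    also have "\<dots> \<le> (theta_bound_const * (1 + u + u * sqrt u)) * norm (diff_kernel b u)"
      using abs_theta_partial_le[OF True, of n] by (intro mult_right_mono) auto
    finally show ?thesis unfolding g_def w_def kernel_majorant_def using True by simp
  qed (simp add: g_def w_def)
  have "integrable lborel f"
    by (rule integrable_dominated_convergence[OF f_measurable g_measurable w_integrable])
       (auto intro: g_lim g_bound)
  thus "set_integrable lborel {0<..} (\<lambda>u. of_real (vartheta u) * diff_kernel b u)"
    unfolding f_def set_integrable_def .
  have "(\<lambda>n. integral\<^sup>L lborel (g n)) \<longlonglongrightarrow> integral\<^sup>L lborel f"
    by (rule integral_dominated_convergence[OF f_measurable g_measurable w_integrable])
       (auto intro: g_lim g_bound)
  thus "(\<lambda>n. LBINT u:{0<..}. of_real (theta_partial n u) * diff_kernel b u)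
      \<longlonglongrightarrow> (LBINT u:{0<..}. of_real (vartheta u) * diff_kernel b u)"
    unfolding g_def f_def set_lebesgue_integral_def .
qed


section \<open>Weierstrass products and the theorem\<close>

lemma Gamma_series_Weierstrass_ratio:
  fixes z w :: complex
  assumes z: "Re z > 0" and w: "Re w > 0"
  shows "Gamma_series_Weierstrass z n / Gamma_series_Weierstrass w n
     = exp (- euler_mascheroni * (z - w)) * (w / z)
       * (\<Prod>k<n. exp ((z - w) / of_nat (Suc k)) * ((of_nat (Suc k) + w) / (of_nat (Suc k) + z)))"
proof -
  have factor: "(exp (z / of_nat k) / (1 + z / of_nat k)) / (exp (w / of_nat k) / (1 + w / of_nat k))
      = exp ((z - w) / of_nat k) * ((of_nat k + w) / (of_nat k + z))" if "k \<ge> 1" for k :: nat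
  proof -
    have nz: "of_nat k + z \<noteq> 0" "of_nat k + w \<noteq> 0" "(of_nat k :: complex) \<noteq> 0"
      using that z w by (auto simp: complex_eq_iff)
    have "exp (z / of_nat k) = exp ((z - w) / of_nat k) * exp (w / of_nat k)"
      by (simp flip: exp_add add: diff_divide_distrib)
    moreover have "(E * X / (1 + z / K)) / (X / (1 + w / K)) = E * ((K + w) / (K + z))"
      if "X \<noteq> 0" "K \<noteq> 0" "K + z \<noteq> 0" "K + w \<noteq> 0" for E X K :: complex
    proof -
      have "1 + z / K = (K + z) / K" "1 + w / K = (K + w) / K" using that by (simp_all add: field_simps)
      thus ?thesis using that by (simp add: divide_simps)
    qed
    ultimately show ?thesis using nz by simp
  qed
  have "Gamma_series_Weierstrass z n / Gamma_series_Weierstrass w n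
     = (exp (- euler_mascheroni * z) / z) / (exp (- euler_mascheroni * w) / w)
       * (\<Prod>k=1..n. (exp (z / of_nat k) / (1 + z / of_nat k)) / (exp (w / of_nat k) / (1 + w / of_nat k)))"
    unfolding Gamma_series_Weierstrass_def prod_dividef by (simp only: times_divide_times_eq)
  also have "(\<Prod>k=1..n. (exp (z / of_nat k) / (1 + z / of_nat k)) / (exp (w / of_nat k) / (1 + w / of_nat k)))
      = (\<Prod>k=1..n. exp ((z - w) / of_nat k) * ((of_nat k + w) / (of_nat k + z)))"
    by (rule prod.cong[OF refl], rule factor) auto
  also have "\<dots> = (\<Prod>k<n. exp ((z - w) / of_nat (Suc k)) * ((of_nat (Suc k) + w) / (of_nat (Suc k) + z)))"
    by (simp add: prod.atLeast1_atMost_eq)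
  also have "(exp (- euler_mascheroni * z) / z) / (exp (- euler_mascheroni * w) / w)
      = exp (- euler_mascheroni * (z - w)) * (w / z)"
  proof -
    have "exp (- euler_mascheroni * z) = exp (- euler_mascheroni * (z - w)) * exp (- euler_mascheroni * w)"
      by (simp flip: exp_add add: algebra_simps)
    thus ?thesis using z w by (auto simp: field_simps)
  qed
  finally show ?thesis .
qed

(* One factor: exp of the k-th summand of theta_integral s is the k-th factor of the
   Weierstrass ratio for Gamma (s/2) / Gamma (1/2). *)
lemma exp_theta_integral_summand:
  assumes s: "Re s > 1/2"
  shows "exp ((s - 1) / (2 * of_nat (Suc k)) - Ln ((2 * of_nat (Suc k) + s) / (2 * of_nat (Suc k) + 1)))
      = exp ((s/2 - 1/2) / of_nat (Suc k)) * ((of_nat (Suc k) + 1/2) / (of_nat (Suc k) + s/2))"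
proof -
  have nz: "2 * of_nat (Suc k) + s \<noteq> 0" "2 * of_nat (Suc k) + 1 \<noteq> (0::complex)"
    using s by (auto simp: complex_eq_iff)
  have exponent: "(s/2 - 1/2) / (of_nat (Suc k) :: complex) = (s - 1) / (2 * of_nat (Suc k))"
    by (simp add: field_simps)
  have regroup: "E / ((2 * M + s) / (2 * M + 1)) = E * ((M + 1/2) / (M + s/2))"
    if "2 * M + s \<noteq> 0" "2 * M + 1 \<noteq> 0" for E M :: complex
  proof -
    have "M + s/2 \<noteq> 0" using that by (simp add: field_simps)
    hence "(M + 1/2) / (M + s/2) = (2 * M + 1) / (2 * M + s)"
      using that by (simp add: frac_eq_eq algebra_simps)
    thus ?thesis by simp
  qed
  have ratio_nz: "(2 * of_nat (Suc k) + s) / (2 * of_nat (Suc k) + 1) \<noteq> 0" using nz by simp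
  show ?thesis unfolding exponent exp_diff exp_Ln[OF ratio_nz] by (rule regroup[OF nz])
qed

lemma exp_theta_integral:
  assumes s: "Re s > 1/2"
  shows "exp (theta_integral s n) = exp (- of_real (ln pi / 2) * (s - 1))
           * (Gamma_series_Weierstrass (s/2) n / Gamma_series_Weierstrass (1/2) n)"
proof -
  let ?c = "of_real ((euler_mascheroni + ln pi) / 2) :: complex"
  let ?P = "\<Prod>k<n. exp ((s/2 - 1/2) / of_nat (Suc k)) * ((of_nat (Suc k) + 1/2) / (of_nat (Suc k) + s/2))"
  have "exp (theta_integral s n) = exp (- Ln s) * exp (- ?c * (s - 1)) * ?P"
    unfolding theta_integral_def exp_add exp_sum[OF finite_lessThan] exp_theta_integral_summand[OF s]
    by (simp only: diff_conv_add_uminus exp_add mult_minus_left)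
  also have "exp (- Ln s) = (1/2) / (s/2)"
  proof -
    have "s \<noteq> 0" using s by auto
    thus ?thesis by (simp add: exp_minus inverse_eq_divide)
  qed
  also have "exp (- ?c * (s - 1))
      = exp (- of_real (ln pi / 2) * (s - 1)) * exp (- euler_mascheroni * (s/2 - 1/2))"
  proof -
    have "- ?c * (s - 1) = - of_real (ln pi / 2) * (s - 1) + - euler_mascheroni * (s/2 - 1/2)"
      by (simp add: field_simps)
    thus ?thesis by (simp only: exp_add)
  qed
  also have "(1/2) / (s/2) * (exp (- of_real (ln pi / 2) * (s - 1)) * exp (- euler_mascheroni * (s/2 - 1/2))) * ?P
      = exp (- of_real (ln pi / 2) * (s - 1))
        * (exp (- euler_mascheroni * (s/2 - 1/2)) * ((1/2) / (s/2)) * ?P)"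
    by (simp only: mult_ac)
  also have "\<dots> = exp (- of_real (ln pi / 2) * (s - 1))
      * (Gamma_series_Weierstrass (s/2) n / Gamma_series_Weierstrass (1/2) n)"
    using s by (subst Gamma_series_Weierstrass_ratio) auto
  finally show ?thesis .
qed

(* With Gamma (1/2) = sqrt pi = exp (ln pi / 2), the limit is the claimed right-hand side. *)
lemma pi_power_times_Gamma_ratio:
  "exp (- of_real (ln pi / 2) * (s - 1)) * (Gamma (s/2) / Gamma (1/2))
     = Gamma (s / 2) * complex_of_real pi powr (- s / 2)"
proof -
  have "Gamma (1/2 :: complex) = exp (of_real (ln pi / 2))"
    by (simp add: Gamma_one_half_complex powr_half_sqrt[symmetric] powr_def flip: exp_of_real)
  moreover have "complex_of_real pi powr (- s / 2) = exp (- of_real (ln pi / 2) * (s - 1) - of_real (ln pi / 2))"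
    by (simp add: powr_def Ln_of_real field_simps)
  ultimately show ?thesis by (simp add: exp_diff)
qed

theorem mainTheorem6:
  fixes s :: complex
  assumes "Re s > 1 / 2"
  shows "set_integrable lborel {0<..} (\<lambda>u. complex_of_real (vartheta u) * K_C s u)
    \<and> exp (LBINT u:{0<..}. complex_of_real (vartheta u) * K_C s u)
        = Gamma (s / 2) * complex_of_real pi powr (- s / 2)"
proof -
  have s: "Re s > 1/2" using assms by simp
  define b where "b = s - 1/2"
  have b: "Re b > 0" unfolding b_def using s by simp
  have kernel: "K_C s = diff_kernel b" unfolding b_def by (rule ext, rule K_C_eq_diff_kernel[OF s])
  let ?I = "LBINT u:{0<..}. complex_of_real (vartheta u) * diff_kernel b u"
  have "theta_integral s \<longlonglongrightarrow> ?I"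
    using tendsto_integral_theta_partial(2)[OF b] integral_theta_partial[OF s] unfolding b_def by simp
  hence "(\<lambda>n. exp (theta_integral s n)) \<longlonglongrightarrow> exp ?I" by (rule tendsto_exp)
  moreover have "(\<lambda>n. exp (theta_integral s n))
      \<longlonglongrightarrow> exp (- of_real (ln pi / 2) * (s - 1)) * (Gamma (s/2) / Gamma (1/2))"
    unfolding exp_theta_integral[OF s]
    by (intro tendsto_intros Gamma_Weierstrass_complex) (simp add: Gamma_one_half_complex)
  ultimately have "exp ?I = Gamma (s / 2) * complex_of_real pi powr (- s / 2)"
    unfolding pi_power_times_Gamma_ratio by (rule LIMSEQ_unique)
  thus ?thesis using tendsto_integral_theta_partial(1)[OF b] unfolding kernel by simp
qed

end
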